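(* Let $P,Q$ be integers with $PQ\ne0$, $\gcd(P,Q)=1$ and $\Delta:=P^2-4Q>0$, let $\alpha,\beta$ be the roots of $x^2-Px+Q$ with $|\alpha|\ge|\beta|$, and assume $\alpha/\beta$ is not a root of unity. Let $U_n=(\alpha^n-\beta^n)/(\alpha-\beta)$. Then for all positive integers $m,\ell$ with $m\ge\ell$, \[\left|U_\ell\binom{m}{\ell}_{\boldsymbol U}\right|\ge|\alpha|^{\ell(m-\ell-1)-1}.\]
   Context: $U_0=0,U_1=1,U_{n+2}=PU_{n+1}-QU_n$. For $m\ge\ell\ge1$, $\binom{m}{\ell}_{\boldsymbol U}:=\frac{U_mU_{m-1}\cdots U_{m-\ell+1}}{U_1U_2\cdots U_\ell}$. *)

theory Defs
  imports Complex_Main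
begin

fun lucasU :: "int \<Rightarrow> int \<Rightarrow> nat \<Rightarrow> int" where
  "lucasU P Q 0 = 0"
| "lucasU P Q (Suc 0) = 1"
| "lucasU P Q (Suc (Suc n)) = P * lucasU P Q (Suc n) - Q * lucasU P Q n"

definition lucas_binom :: "int \<Rightarrow> int \<Rightarrow> nat \<Rightarrow> nat \<Rightarrow> real" where
  "lucas_binom P Q m l =
     (\<Prod>i<l. real_of_int (lucasU P Q (m - i))) / (\<Prod>i=1..l. real_of_int (lucasU P Q i))"

end

(* For real roots with |beta| <= |alpha| one has |beta| + 1 <= |alpha|, because |alpha| - |beta|
   equals either |alpha - beta| = sqrt (P^2 - 4Q) or |alpha + beta| = |P|.  Binet's formula
   U_n (alpha - beta) = alpha^n - beta^n then pins |U_n| between |alpha|^(n-1-e) and |alpha|^(n-e),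
   where e = 0 if Q > 0 (roots of equal sign) and e = 1 otherwise.  So every factor
   U_(m-i) / U_(i+1) of the Lucasnomial is at least |alpha|^(m-2i-2), their product over i < l is
   at least |alpha|^(l(m-l-1)), and |U_l| >= |alpha|^(-1) supplies the remaining factor. *)

theory Submission
  imports Defs
begin

lemma lucasU_binet:
  fixes alpha beta :: "'a::comm_ring_1"
  assumes "alpha + beta = of_int P" and "alpha * beta = of_int Q"
  shows "of_int (lucasU P Q n) * (alpha - beta) = alpha ^ n - beta ^ n"
  using assms
proof (induction P Q n rule: lucasU.induct)
  case (3 P Q n)
  have "of_int (lucasU P Q (Suc (Suc n))) * (alpha - beta)
      = (alpha + beta) * (of_int (lucasU P Q (Suc n)) * (alpha - beta))
        - alpha * beta * (of_int (lucasU P Q n) * (alpha - beta))"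
    by (simp add: "3.prems" algebra_simps)
  also have "\<dots> = (alpha + beta) * (alpha ^ Suc n - beta ^ Suc n)
        - alpha * beta * (alpha ^ n - beta ^ n)"
    by (simp only: "3.IH"[OF "3.prems"])
  also have "\<dots> = alpha ^ Suc (Suc n) - beta ^ Suc (Suc n)"
    by (simp add: algebra_simps)
  finally show ?case .
qed simp_all

lemma binet_quotient_bounds_same_sign:
  fixes x y D :: real
  assumes "0 < y" and "y + 1 \<le> x" and "D * (x - y) = x ^ Suc k - y ^ Suc k"
  shows "x ^ k \<le> D \<and> D \<le> x ^ Suc k"
proof
  have "x ^ k * (x - y) = x ^ Suc k - x ^ k * y"
    by (simp add: algebra_simps)
  also have "\<dots> \<le> x ^ Suc k - y ^ k * y"
    using assms by (simp add: mult_right_mono power_mono)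
  also have "\<dots> = D * (x - y)"
    using assms by (simp add: mult.commute)
  finally show lower: "x ^ k \<le> D"
    by (rule mult_right_le_imp_le) (use assms in simp)
  have "0 \<le> x ^ k"
    using assms by simp
  then have "D * 1 \<le> D * (x - y)"
    using lower assms by (intro mult_left_mono) linarith+
  also have "\<dots> \<le> x ^ Suc k"
    using assms by simp
  finally show "D \<le> x ^ Suc k"
    by simp
qed

lemma binet_quotient_bounds_opposite_sign:
  fixes x b D :: real
  assumes "0 < b" and "b + 1 \<le> x"
    and binet: "D * (x + b) = x ^ Suc (Suc k) - (- b) ^ Suc (Suc k)"
  shows "x ^ k \<le> D \<and> D \<le> x ^ Suc k"
proof
  have abs_pow: "\<bar>(- b) ^ Suc (Suc k)\<bar> = b ^ Suc (Suc k)"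
    by (metis abs_minus_cancel abs_of_pos assms(1) power_abs)
  have "x ^ k * (x + b) \<le> x ^ k * ((x + b) * (x - b))"
    using assms by (intro mult_left_mono) (simp_all add: mult_le_cancel_left1)
  also have "\<dots> = x ^ Suc (Suc k) - x ^ k * b\<^sup>2"
    by (simp add: algebra_simps power2_eq_square)
  also have "\<dots> \<le> x ^ Suc (Suc k) - b ^ Suc (Suc k)"
    using assms by (simp add: mult_right_mono power_mono power2_eq_square)
  also have "\<dots> \<le> D * (x + b)"
    unfolding binet using abs_pow by linarith
  finally show "x ^ k \<le> D"
    by (rule mult_right_le_imp_le) (use assms in simp)
  have "D * (x + b) \<le> x ^ Suc (Suc k) + b ^ Suc (Suc k)"
    unfolding binet using abs_pow by linarith
  also have "\<dots> \<le> x ^ Suc k * (x + b)"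
    using mult_right_mono[OF power_mono[of b x "Suc k"], of b] assms
    by (simp add: algebra_simps)
  finally show "D \<le> x ^ Suc k"
    by (rule mult_right_le_imp_le) (use assms in simp)
qed

lemma binet_quotient_bounds_pos:
  fixes x y D :: real
  assumes gap: "\<bar>y\<bar> + 1 \<le> x" and "y \<noteq> 0" and binet: "D * (x - y) = x ^ n - y ^ n"
    and "n \<ge> 1"
  defines "e \<equiv> if 0 < y then 0 else 1 :: int"
  shows "x powi (int n - 1 - e) \<le> \<bar>D\<bar> \<and> \<bar>D\<bar> \<le> x powi (int n - e)"
proof -
  obtain k where n: "n = Suc k"
    using \<open>n \<ge> 1\<close> by (cases n) auto
  consider "0 < y" | "y < 0" "k = 0" | j where "y < 0" "k = Suc j"
    using \<open>y \<noteq> 0\<close> by (cases k) force+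
  then show ?thesis
  proof cases
    case 1
    then have "x ^ k \<le> D \<and> D \<le> x ^ Suc k"
      using gap binet n by (intro binet_quotient_bounds_same_sign) simp_all
    moreover have "0 \<le> x ^ k"
      using gap by simp
    moreover have "int n - 1 - e = int k" "int n - e = int (Suc k)"
      using 1 n by (simp_all add: e_def)
    ultimately show ?thesis
      by (simp only: power_int_of_nat) linarith
  next
    case 2
    then have "D = 1"
      using binet n gap by auto
    then show ?thesis
      using 2 gap n by (simp add: e_def power_int_minus inverse_le_1_iff)
  next
    case 3
    then have "x ^ j \<le> D \<and> D \<le> x ^ Suc j"
      using gap binet n by (intro binet_quotient_bounds_opposite_sign[of "- y"]) simp_all
    moreover have "0 \<le> x ^ j"
      using gap by simp
    moreover have "int n - 1 - e = int j" "int n - e = int (Suc j)"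
      using 3 n by (simp_all add: e_def)
    ultimately show ?thesis
      by (simp only: power_int_of_nat) linarith
  qed
qed

lemma binet_quotient_bounds:
  fixes x y D :: real
  assumes gap: "\<bar>y\<bar> + 1 \<le> \<bar>x\<bar>" and "y \<noteq> 0" and binet: "D * (x - y) = x ^ n - y ^ n"
    and "n \<ge> 1"
  defines "e \<equiv> if 0 < x * y then 0 else 1 :: int"
  shows "\<bar>x\<bar> powi (int n - 1 - e) \<le> \<bar>D\<bar> \<and> \<bar>D\<bar> \<le> \<bar>x\<bar> powi (int n - e)"
proof (cases "0 < x")
  case True
  then show ?thesis
    using binet_quotient_bounds_pos[OF _ assms(2-4)] gap
    by (simp add: e_def zero_less_mult_iff)
next
  case False
  have "((-1) ^ Suc n * D) * (- x - - y) = (-1) ^ n * (D * (x - y))"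
    by (simp add: algebra_simps)
  also have "\<dots> = (- x) ^ n - (- y) ^ n"
    by (simp only: binet power_minus[of x] power_minus[of y]) (simp add: algebra_simps)
  finally have flipped: "((-1) ^ Suc n * D) * (- x - - y) = (- x) ^ n - (- y) ^ n" .
  have "\<bar>- y\<bar> + 1 \<le> - x" "- y \<noteq> 0"
    using False gap assms(2) by simp_all
  note flipped_bounds = binet_quotient_bounds_pos[OF this flipped \<open>n \<ge> 1\<close>]
  have "\<bar>x\<bar> = - x" "\<bar>(-1) ^ Suc n * D\<bar> = \<bar>D\<bar>" "(if 0 < - y then 0 else 1) = e"
    using False gap by (auto simp: e_def abs_mult zero_less_mult_iff)
  with flipped_bounds show ?thesis
    by (simp only:)
qed

lemma lucas_binom_abs:
  "\<bar>lucas_binom P Q m l\<bar>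
     = (\<Prod>i<l. \<bar>of_int (lucasU P Q (m - i))\<bar> / \<bar>of_int (lucasU P Q (Suc i))\<bar>)"
  by (simp add: lucas_binom_def abs_prod prod_dividef prod.atLeast1_atMost_eq)

context
  fixes P Q :: int and alpha beta :: real
  assumes PQ_nonzero: "P * Q \<noteq> 0"
    and disc_pos: "P\<^sup>2 - 4 * Q > 0"
    and root_sum: "alpha + beta = of_int P"
    and root_prod: "alpha * beta = of_int Q"
    and root_dominant: "\<bar>beta\<bar> \<le> \<bar>alpha\<bar>"
begin

lemma root_gap: "\<bar>beta\<bar> + 1 \<le> \<bar>alpha\<bar>"
proof -
  have "(alpha - beta)\<^sup>2 = (alpha + beta)\<^sup>2 - 4 * (alpha * beta)"
    by (simp add: power2_eq_square algebra_simps)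
  also have "\<dots> = of_int (P\<^sup>2 - 4 * Q)"
    by (simp add: root_sum root_prod)
  also have "\<dots> \<ge> 1"
    using disc_pos by (simp only: of_int_1_le_iff)
  finally have "1 \<le> \<bar>alpha - beta\<bar>"
    by (metis abs_le_square_iff abs_one one_power2)
  moreover have "1 \<le> \<bar>alpha + beta\<bar>"
    using PQ_nonzero unfolding root_sum
    by (metis of_int_1_le_iff of_int_abs mult_eq_0_iff zero_less_abs_iff int_one_le_iff_zero_less)
  ultimately show ?thesis
    using root_dominant by (auto simp: abs_if split: if_splits)
qed

lemma lucasU_abs_bounds:
  assumes "n \<ge> 1"
  defines "e \<equiv> if 0 < Q then 0 else 1 :: int"
  shows "\<bar>alpha\<bar> powi (int n - 1 - e) \<le> \<bar>of_int (lucasU P Q n)\<bar>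
    \<and> \<bar>of_int (lucasU P Q n)\<bar> \<le> \<bar>alpha\<bar> powi (int n - e)"
proof -
  have "beta \<noteq> 0"
    using PQ_nonzero root_prod by auto
  with binet_quotient_bounds[OF root_gap _ lucasU_binet[OF root_sum root_prod] assms(1)]
  show ?thesis
    by (simp add: e_def root_prod)
qed

lemma lucasU_ratio_lower_bound:
  assumes "p \<ge> 1" and "q \<ge> 1"
  shows "\<bar>alpha\<bar> powi (int p - int q - 1)
           \<le> \<bar>of_int (lucasU P Q p)\<bar> / \<bar>of_int (lucasU P Q q)\<bar>"
proof -
  define e :: int where "e = (if 0 < Q then 0 else 1)"
  define a where "a = \<bar>alpha\<bar>"
  have "a > 0"
    using root_gap by (simp add: a_def)
  have lower: "a powi (int p - 1 - e) \<le> \<bar>of_int (lucasU P Q p)\<bar>"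
    and upper: "\<bar>of_int (lucasU P Q q)\<bar> \<le> a powi (int q - e)"
    and "a powi (int q - 1 - e) \<le> \<bar>of_int (lucasU P Q q)\<bar>"
    using lucasU_abs_bounds[OF \<open>p \<ge> 1\<close>] lucasU_abs_bounds[OF \<open>q \<ge> 1\<close>]
    by (simp_all add: a_def e_def)
  then have "0 < \<bar>of_int (lucasU P Q q) :: real\<bar>"
    using \<open>a > 0\<close> by (meson order_less_le_trans zero_less_power_int)
  have "int p - int q - 1 = (int p - 1 - e) - (int q - e)"
    by simp
  then have "a powi (int p - int q - 1) = a powi (int p - 1 - e) / a powi (int q - e)"
    using \<open>a > 0\<close> by (simp add: power_int_diff)
  also have "\<dots> \<le> \<bar>of_int (lucasU P Q p)\<bar> / \<bar>of_int (lucasU P Q q)\<bar>"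
    using lower upper \<open>0 < \<bar>of_int (lucasU P Q q) :: real\<bar>\<close> \<open>a > 0\<close>
    by (intro frac_le) simp_all
  finally show ?thesis
    by (simp add: a_def)
qed

lemma lucas_binom_lower_bound:
  assumes "l \<le> m"
  shows "\<bar>alpha\<bar> powi (int l * (int m - int l - 1)) \<le> \<bar>lucas_binom P Q m l\<bar>"
  using assms
proof (induction l)
  case 0
  then show ?case
    by (simp add: lucas_binom_abs)
next
  case (Suc l)
  let ?r = "\<lambda>i. \<bar>of_int (lucasU P Q (m - i))\<bar> / \<bar>of_int (lucasU P Q (Suc i))\<bar> :: real"
  have "\<bar>alpha\<bar> \<noteq> 0"
    using root_gap by simp
  then have "\<bar>alpha\<bar> powi (int (Suc l) * (int m - int (Suc l) - 1))
      = \<bar>alpha\<bar> powi (int l * (int m - int l - 1)) * \<bar>alpha\<bar> powi (int (m - l) - int (Suc l) - 1)"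
    using Suc.prems by (simp add: algebra_simps flip: power_int_add)
  also have "\<dots> \<le> (\<Prod>i<l. ?r i) * ?r l"
    using Suc lucasU_ratio_lower_bound[of "m - l" "Suc l"]
    by (intro mult_mono) (simp_all add: lucas_binom_abs prod_nonneg)
  also have "\<dots> = \<bar>lucas_binom P Q m (Suc l)\<bar>"
    by (simp add: lucas_binom_abs)
  finally show ?case .
qed

end

theorem lemma9:
  fixes P Q :: int and alpha beta :: real and m l :: nat
  assumes "P * Q \<noteq> 0" and "gcd P Q = 1" and "P^2 - 4 * Q > 0"
    and "alpha + beta = real_of_int P" and "alpha * beta = real_of_int Q"
    and "\<bar>alpha\<bar> \<ge> \<bar>beta\<bar>"
    and "\<forall>n::nat. n \<ge> 1 \<longrightarrow> (alpha / beta) ^ n \<noteq> 1"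
    and "l \<ge> 1" and "m \<ge> l"
  shows "\<bar>real_of_int (lucasU P Q l) * lucas_binom P Q m l\<bar>
           \<ge> \<bar>alpha\<bar> powi (int l * (int m - int l - 1) - 1)"
proof -
  note lucas_hyps = assms(1,3-6)
  have "1 \<le> \<bar>alpha\<bar>"
    using root_gap[OF lucas_hyps] by simp
  then have "\<bar>alpha\<bar> powi (-1) \<le> \<bar>alpha\<bar> powi (int l - 1 - (if 0 < Q then 0 else 1))"
    using \<open>l \<ge> 1\<close> by (intro power_int_increasing) auto
  also have "\<dots> \<le> \<bar>real_of_int (lucasU P Q l)\<bar>"
    using lucasU_abs_bounds[OF lucas_hyps \<open>l \<ge> 1\<close>] by simp
  finally have "\<bar>alpha\<bar> powi (-1) \<le> \<bar>real_of_int (lucasU P Q l)\<bar>" .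
  moreover have "\<bar>alpha\<bar> powi (int l * (int m - int l - 1)) \<le> \<bar>lucas_binom P Q m l\<bar>"
    using lucas_binom_lower_bound[OF lucas_hyps \<open>m \<ge> l\<close>] .
  ultimately have "\<bar>alpha\<bar> powi (-1) * \<bar>alpha\<bar> powi (int l * (int m - int l - 1))
      \<le> \<bar>real_of_int (lucasU P Q l)\<bar> * \<bar>lucas_binom P Q m l\<bar>"
    by (intro mult_mono) simp_all
  moreover have "\<bar>alpha\<bar> powi (int l * (int m - int l - 1) - 1)
      = \<bar>alpha\<bar> powi (-1) * \<bar>alpha\<bar> powi (int l * (int m - int l - 1))"
    using \<open>1 \<le> \<bar>alpha\<bar>\<close> by (subst power_int_diff) (auto simp: divide_inverse mult.commute)
  ultimately show ?thesis
    by (simp add: abs_mult)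
qed

end
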